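(* Let $\mathcal{F}\subseteq\mathcal{P}(\omega)$ be compact (as a subset of $2^\omega$). Then $\mathbb{P}_{\mathcal{F}}$ is a closed subset of $\mathcal{K}(\mathcal{F})$ endowed with the Vietoris topology. Consequently $\mathbb{P}_{\mathcal{F}}$ is a compact subspace of $\mathcal{K}(\mathcal{F})$.
   Context: $\omega=\{1,2,3,\dots\}$. Subsets of $\omega$ are identified with their characteristic functions, i.e. with elements of the Cantor space $2^\omega$ (product topology); topological notions (closed, compact) for families $\mathcal{F}\subseteq\mathcal{P}(\omega)$ refer to this identification. A partition is a family $\mathcal{P}\subseteq\mathcal{P}(\omega)$ such that $\emptyset\in\mathcal{P}$, $\bigcup\mathcal{P}=\omega$, and the elements of $\mathcal{P}$ are pairwise disjoint. $\mathbb{P}_\mathcal{F}$ denotes the set of all partitions $\mathcal{P}$ with $\mathcal{P}\subseteq\mathcal{F}$. Every partition is a closed subset of $2^\omega$. For a compact space $X$, $\mathcal{K}(X)$ is the family of closed subsets of $X$ with the Vietoris topology, generated by the sets $\langle U_1,\dots,U_n\rangle=\{K\in\mathcal{K}(X): K\subseteq\bigcup_{i\le n}U_i \text{ and } K\cap U_i\neq\emptyset \text{ for all } i\le n\}$ with $U_i$ open in $X$. *)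

theory Defs
  imports "HOL-Analysis.Analysis"
begin

definition omega :: "nat set" where
  "omega = {1..}"

text \<open>Cantor space 2^omega: subsets of omega identified with their characteristic
  functions omega -> {0,1} (bool), carrying the product of discrete topologies.\<close>
definition cantor_space :: "nat set topology" where
  "cantor_space = pullback_topology (Pow omega) (\<lambda>A. restrict (\<lambda>n. n \<in> A) omega)
      (product_topology (\<lambda>_. discrete_topology (UNIV :: bool set)) omega)"

definition vietoris_basic :: "'a topology \<Rightarrow> 'a set list \<Rightarrow> 'a set set" where
  "vietoris_basic X Us = {K. closedin X K \<and> K \<subseteq> \<Union>(set Us) \<and> (\<forall>U\<in>set Us. K \<inter> U \<noteq> {})}"

definition vietoris :: "'a topology \<Rightarrow> 'a set topology" where
  "vietoris X = subtopology
      (topology_generated_by {vietoris_basic X Us | Us. \<forall>U\<in>set Us. openin X U})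
      {K. closedin X K}"

definition is_partition :: "nat set set \<Rightarrow> bool" where
  "is_partition P \<longleftrightarrow> {} \<in> P \<and> \<Union>P = omega \<and> (\<forall>A\<in>P. \<forall>B\<in>P. A \<noteq> B \<longrightarrow> A \<inter> B = {})"

definition partitions_in :: "nat set set \<Rightarrow> nat set set set" where
  "partitions_in F = {P. is_partition P \<and> P \<subseteq> F}"

end

theory Submission
  imports Defs
begin

text \<open>A partition is closed in \<open>F\<close>: a set outside it is separated from it by fixing two
  coordinates, so every partition inside \<open>F\<close> is a point of \<open>\<K>(F)\<close>. A closed family fails to be a
  partition in one of three ways: it omits \<open>{}\<close>, it misses some point \<open>n\<close>, or two distinct members
  share a point \<open>n\<close> (and differ at some \<open>m\<close>). Each failure is an open condition on \<open>K\<close>, expressed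
  by the upper set \<open>{K. K \<subseteq> U}\<close> or by lower sets \<open>{K. K \<inter> U \<noteq> {}}\<close> of finitely many cylinders, so
  the partitions form a closed set. Compactness then follows because the Vietoris hyperspace
  of a compact space is compact: by Alexander's subbase lemma it suffices to refine covers
  by upper and lower sets, and the points missed by all lower sets of such a cover form a
  closed set lying in one of its upper sets.\<close>

lemma topspace_cantor_space [simp]: "topspace cantor_space = Pow omega"
  unfolding cantor_space_def topspace_pullback_topology by auto

lemma continuous_map_cantor_space_mem:
  assumes "k \<in> omega"
  shows "continuous_map cantor_space (discrete_topology UNIV) (\<lambda>D. k \<in> D)"
proof -
  have "continuous_map cantor_space (discrete_topology UNIV)
          ((\<lambda>h. h k) \<circ> (\<lambda>A. restrict (\<lambda>n. n \<in> A) omega))"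
    unfolding cantor_space_def
    by (rule continuous_map_pullback) (use continuous_map_product_projection assms in force)
  moreover have "(\<lambda>h. h k) \<circ> (\<lambda>A. restrict (\<lambda>n. n \<in> A) omega) = (\<lambda>D. k \<in> D)"
    using assms by auto
  ultimately show ?thesis by simp
qed

lemma openin_cantor_cylinder:
  assumes "k \<in> omega"
  shows "openin (subtopology cantor_space F)
           {D \<in> topspace (subtopology cantor_space F). (k \<in> D) = b}"
proof -
  have "continuous_map (subtopology cantor_space F) (discrete_topology UNIV) (\<lambda>D. k \<in> D)"
    using continuous_map_cantor_space_mem[OF assms] by (rule continuous_map_from_subtopology)
  from openin_continuous_map_preimage[OF this, of "{b}"] show ?thesis by simp
qed

lemma openin_cantor_cylinder2:
  assumes "n \<in> omega" "m \<in> omega"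
  shows "openin (subtopology cantor_space F)
           {D \<in> topspace (subtopology cantor_space F). n \<in> D \<and> (m \<in> D) = b}"
proof -
  have "{D \<in> topspace (subtopology cantor_space F). n \<in> D \<and> (m \<in> D) = b}
      = {D \<in> topspace (subtopology cantor_space F). (n \<in> D) = True}
        \<inter> {D \<in> topspace (subtopology cantor_space F). (m \<in> D) = b}"
    by auto
  then show ?thesis by (simp only:) (intro openin_Int openin_cantor_cylinder assms)
qed

lemma openin_cantor_nonempty:
  "openin (subtopology cantor_space F) {D \<in> topspace (subtopology cantor_space F). D \<noteq> {}}"
proof -
  let ?X = "subtopology cantor_space F"
  have "{D \<in> topspace ?X. D \<noteq> {}} = (\<Union>k\<in>omega. {D \<in> topspace ?X. (k \<in> D) = True})"
    by auto
  moreover have "openin ?X (\<Union>k\<in>omega. {D \<in> topspace ?X. (k \<in> D) = True})"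
    using openin_cantor_cylinder[of _ F True] by (intro openin_Union) blast
  ultimately show ?thesis by simp
qed

lemma topspace_vietoris: "topspace (vietoris X) = {K. closedin X K}"
proof -
  let ?B = "{vietoris_basic X Us | Us. \<forall>U\<in>set Us. openin X U}"
  have "vietoris_basic X [] \<in> ?B" "vietoris_basic X [topspace X] \<in> ?B"
    by force+
  moreover have "K \<in> vietoris_basic X [] \<union> vietoris_basic X [topspace X]" if "closedin X K" for K
    using that closedin_subset by (auto simp: vietoris_basic_def)
  ultimately have "{K. closedin X K} \<subseteq> \<Union>?B"
    by blast
  then show ?thesis unfolding vietoris_def by auto
qed

lemma openin_vietoris_basic:
  assumes "\<forall>U\<in>set Us. openin X U"
  shows "openin (vietoris X) (vietoris_basic X Us)"
proof -
  have "openin (topology_generated_by {vietoris_basic X Us | Us. \<forall>U\<in>set Us. openin X U})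
          (vietoris_basic X Us)"
    by (rule topology_generated_by_Basis) (use assms in blast)
  moreover have "vietoris_basic X Us = vietoris_basic X Us \<inter> {K. closedin X K}"
    by (auto simp: vietoris_basic_def)
  ultimately show ?thesis unfolding vietoris_def openin_subtopology by blast
qed

lemma openin_vietoris_upper:
  assumes "openin X U"
  shows "openin (vietoris X) {K. closedin X K \<and> K \<subseteq> U}"
proof -
  have "{K. closedin X K \<and> K \<subseteq> U} = vietoris_basic X [] \<union> vietoris_basic X [U]"
    by (auto simp: vietoris_basic_def)
  then show ?thesis using assms by (simp add: openin_Un openin_vietoris_basic)
qed

lemma openin_vietoris_lower:
  assumes "openin X U"
  shows "openin (vietoris X) {K. closedin X K \<and> K \<inter> U \<noteq> {}}"
proof -
  have "{K. closedin X K \<and> K \<inter> U \<noteq> {}} = vietoris_basic X [topspace X, U]"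
    using closedin_subset by (fastforce simp: vietoris_basic_def)
  then show ?thesis using assms by (simp add: openin_vietoris_basic)
qed

definition vietoris_subbasis :: "'a topology \<Rightarrow> 'a set set set" where
  "vietoris_subbasis X = {{K. closedin X K \<and> K \<subseteq> U} | U. openin X U}
                       \<union> {{K. closedin X K \<and> K \<inter> U \<noteq> {}} | U. openin X U}"

lemma vietoris_eq_subbase_topology:
  "vietoris X = topology (arbitrary union_of
     (finite intersection_of (\<lambda>S. S \<in> vietoris_subbasis X) relative_to {K. closedin X K}))"
  (is "_ = ?Y")
proof -
  let ?C = "{K. closedin X K}"
  have subbasic_open: "openin ?Y S" if "S \<in> vietoris_subbasis X" for S
  proof -
    have "S \<inter> ?C = S" using that by (auto simp: vietoris_subbasis_def)
    then have "(finite intersection_of (\<lambda>S. S \<in> vietoris_subbasis X) relative_to ?C) S"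
      using relative_to_inc[of "finite intersection_of (\<lambda>S. S \<in> vietoris_subbasis X)" S ?C]
        finite_intersection_of_inc[of "\<lambda>S. S \<in> vietoris_subbasis X" S] that
      by (simp add: Int_commute)
    then show ?thesis unfolding openin_subbase by (rule arbitrary_union_of_inc)
  qed
  have basic_open: "openin ?Y (vietoris_basic X Us)" if Us: "\<forall>U\<in>set Us. openin X U" for Us
  proof -
    have "vietoris_basic X Us = {K. closedin X K \<and> K \<subseteq> \<Union>(set Us)}
            \<inter> \<Inter>((\<lambda>U. {K. closedin X K \<and> K \<inter> U \<noteq> {}}) ` set Us)"
      by (auto simp: vietoris_basic_def)
    moreover have "openin ?Y {K. closedin X K \<and> K \<subseteq> \<Union>(set Us)}"
      using Us by (intro subbasic_open) (auto simp: vietoris_subbasis_def)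
    moreover have "openin ?Y {K. closedin X K \<and> K \<inter> U \<noteq> {}}" if "U \<in> set Us" for U
      using Us that by (intro subbasic_open) (auto simp: vietoris_subbasis_def)
    ultimately show ?thesis
      by (simp only:) (intro openin_Int_Inter; blast)
  qed
  have "openin (vietoris X) S \<longleftrightarrow> openin ?Y S" for S
  proof
    assume "openin (vietoris X) S"
    then obtain W where W: "generate_topology_on {vietoris_basic X Us | Us. \<forall>U\<in>set Us. openin X U} W"
      and S: "S = W \<inter> ?C"
      unfolding vietoris_def openin_subtopology openin_topology_generated_by_iff by blast
    have "openin ?Y W"
      by (rule generate_topology_on_coarsest[OF istopology_openin _ W]) (use basic_open in blast)
    moreover from openin_subset[OF this] have "W \<subseteq> ?C" by simp
    ultimately show "openin ?Y S"
      using S by (simp add: Int_absorb2)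
  next
    assume "openin ?Y S"
    moreover have "openin (vietoris X) ?C"
      using openin_topspace[of "vietoris X"] by (simp only: topspace_vietoris)
    moreover have "openin (vietoris X) T" if "T \<in> vietoris_subbasis X" for T
      using that openin_vietoris_upper openin_vietoris_lower
      unfolding vietoris_subbasis_def by blast
    ultimately show "openin (vietoris X) S"
      using minimal_topology_subbase[of "\<lambda>T. T \<in> vietoris_subbasis X" "vietoris X" ?C S] by blast
  qed
  then show ?thesis by (simp add: topology_eq)
qed

lemma vietoris_subbasis_finite_subcover:
  assumes X: "compact_space X" and \<C>: "\<C> \<subseteq> vietoris_subbasis X" and cover: "{K. closedin X K} \<subseteq> \<Union>\<C>"
  shows "\<exists>\<C>'. finite \<C>' \<and> \<C>' \<subseteq> \<C> \<and> {K. closedin X K} \<subseteq> \<Union>\<C>'"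
proof -
  let ?lower = "\<lambda>U. {K. closedin X K \<and> K \<inter> U \<noteq> {}}"
  define \<L> where "\<L> = {U. openin X U \<and> ?lower U \<in> \<C>}"
  define K0 where "K0 = topspace X - \<Union>\<L>"
  have "closedin X K0"
    unfolding K0_def \<L>_def by (intro closedin_diff closedin_topspace openin_Union) auto
  then obtain S where S: "S \<in> \<C>" "K0 \<in> S"
    using cover by blast
  \<comment> \<open>K0 misses every lower set of the cover, so it must lie in one of its upper sets.\<close>
  obtain U0 where U0: "openin X U0" "S = {K. closedin X K \<and> K \<subseteq> U0}"
  proof -
    obtain U where U: "openin X U" "S = {K. closedin X K \<and> K \<subseteq> U} \<or> S = ?lower U"
      using S(1) \<C> unfolding vietoris_subbasis_def by auto
    moreover have "S \<noteq> ?lower U"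
      using S U(1) unfolding K0_def \<L>_def by blast
    ultimately show ?thesis
      using that by blast
  qed
  have "topspace X \<subseteq> \<Union>(insert U0 \<L>)" "\<forall>U\<in>insert U0 \<L>. openin X U"
    using S U0 unfolding K0_def \<L>_def by auto
  then obtain \<G> where \<G>: "finite \<G>" "\<G> \<subseteq> insert U0 \<L>" "topspace X \<subseteq> \<Union>\<G>"
    using X unfolding compact_space_alt by meson
  define \<C>' where "\<C>' = insert S (?lower ` (\<G> - {U0}))"
  have "K \<in> \<Union>\<C>'" if "closedin X K" for K
  proof (cases "\<exists>U\<in>\<G> - {U0}. K \<inter> U \<noteq> {}")
    case True
    then show ?thesis using that unfolding \<C>'_def by blast
  next
    case False
    then have "K \<subseteq> U0" using \<G>(3) closedin_subset[OF that] by blast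
    then show ?thesis using that U0 unfolding \<C>'_def by auto
  qed
  moreover have "finite \<C>'" "\<C>' \<subseteq> \<C>"
    using S \<G> unfolding \<C>'_def \<L>_def by auto
  ultimately show ?thesis by blast
qed

theorem compact_space_vietoris:
  assumes "compact_space X"
  shows "compact_space (vietoris X)"
proof (rule Alexander_subbase_alt[OF _ _ vietoris_eq_subbase_topology[symmetric]])
  have "{K. closedin X K \<and> K \<subseteq> topspace X} \<in> vietoris_subbasis X"
    unfolding vietoris_subbasis_def by auto
  moreover have "{K. closedin X K} \<subseteq> {K. closedin X K \<and> K \<subseteq> topspace X}"
    using closedin_subset by auto
  ultimately show "{K. closedin X K} \<subseteq> \<Union>(vietoris_subbasis X)"
    by blast
qed (rule vietoris_subbasis_finite_subcover[OF assms])

lemma closedin_partition: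
  assumes P: "is_partition P" "P \<subseteq> F"
  shows "closedin (subtopology cantor_space F) P"
proof -
  let ?X = "subtopology cantor_space F"
  have empty: "{} \<in> P" and cover: "\<Union>P = omega"
    and disj: "\<And>A B. A \<in> P \<Longrightarrow> B \<in> P \<Longrightarrow> A \<noteq> B \<Longrightarrow> A \<inter> B = {}"
    using P(1) unfolding is_partition_def by auto
  have "\<exists>N. openin ?X N \<and> A \<in> N \<and> N \<subseteq> topspace ?X - P" if A: "A \<in> topspace ?X - P" for A
  proof -
    have "A \<subseteq> omega" "A \<noteq> {}" using A empty by auto
    then obtain n where n: "n \<in> A" "n \<in> omega" by blast
    then obtain B where B: "B \<in> P" "n \<in> B" using cover by blast
    moreover have "A \<noteq> B" using A B by blast
    ultimately obtain m where m: "(m \<in> A) \<noteq> (m \<in> B)" by (meson set_eqI)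
    then have "m \<in> omega" using \<open>A \<subseteq> omega\<close> B cover by blast
    \<comment> \<open>every member of P containing n is B, which differs from A at m\<close>
    define N where "N = {D \<in> topspace ?X. n \<in> D \<and> (m \<in> D) = (m \<in> A)}"
    have "N \<inter> P = {}" using disj[OF _ B(1)] B(2) m unfolding N_def by blast
    moreover have "openin ?X N"
      unfolding N_def using n(2) \<open>m \<in> omega\<close> by (rule openin_cantor_cylinder2)
    ultimately show ?thesis using A n unfolding N_def by blast
  qed
  moreover have "P \<subseteq> topspace ?X" using P(2) cover by auto
  ultimately show ?thesis unfolding closedin_def by (subst openin_subopen) blast
qed

lemma vietoris_nbhd_no_partition_if_empty_notin:
  assumes K: "closedin (subtopology cantor_space F) K" and "{} \<notin> K"
  shows "\<exists>V. openin (vietoris (subtopology cantor_space F)) V \<and> K \<in> V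
             \<and> (\<forall>P\<in>V. \<not> is_partition P)"
proof -
  let ?X = "subtopology cantor_space F"
  let ?V = "{K. closedin ?X K \<and> K \<subseteq> {D \<in> topspace ?X. D \<noteq> {}}}"
  have "openin (vietoris ?X) ?V"
    by (intro openin_vietoris_upper openin_cantor_nonempty)
  moreover have "K \<in> ?V" using K closedin_subset[OF K] assms(2) by blast
  moreover have "\<forall>P\<in>?V. \<not> is_partition P" by (auto simp: is_partition_def)
  ultimately show ?thesis by blast
qed

lemma vietoris_nbhd_no_partition_if_uncovered:
  assumes K: "closedin (subtopology cantor_space F) K" and n: "n \<in> omega" "n \<notin> \<Union>K"
  shows "\<exists>V. openin (vietoris (subtopology cantor_space F)) V \<and> K \<in> V
             \<and> (\<forall>P\<in>V. \<not> is_partition P)"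
proof -
  let ?X = "subtopology cantor_space F"
  let ?V = "{K. closedin ?X K \<and> K \<subseteq> {D \<in> topspace ?X. (n \<in> D) = False}}"
  have "openin (vietoris ?X) ?V"
    by (intro openin_vietoris_upper openin_cantor_cylinder n(1))
  moreover have "K \<in> ?V" using K closedin_subset[OF K] n(2) by blast
  moreover have "\<forall>P\<in>?V. \<not> is_partition P" using n(1) by (auto simp: is_partition_def)
  ultimately show ?thesis by blast
qed

lemma vietoris_nbhd_no_partition_if_overlap:
  assumes K: "closedin (subtopology cantor_space F) K"
    and AB: "A \<in> K" "B \<in> K" "A \<noteq> B" "A \<inter> B \<noteq> {}"
  shows "\<exists>V. openin (vietoris (subtopology cantor_space F)) V \<and> K \<in> V
             \<and> (\<forall>P\<in>V. \<not> is_partition P)"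
proof -
  let ?X = "subtopology cantor_space F"
  have "A \<subseteq> omega" "B \<subseteq> omega" using closedin_subset[OF K] AB by auto
  obtain n where n: "n \<in> A" "n \<in> B" "n \<in> omega" using AB(4) \<open>A \<subseteq> omega\<close> by blast
  obtain m where m: "(m \<in> A) \<noteq> (m \<in> B)" "m \<in> omega"
    using AB(3) \<open>A \<subseteq> omega\<close> \<open>B \<subseteq> omega\<close> by blast
  \<comment> \<open>members of U1 and of U2 share n but differ at m, so no partition meets both\<close>
  define U1 where "U1 = {D \<in> topspace ?X. n \<in> D \<and> (m \<in> D) = (m \<in> A)}"
  define U2 where "U2 = {D \<in> topspace ?X. n \<in> D \<and> (m \<in> D) = (m \<in> B)}"
  define V where "V = {K. closedin ?X K \<and> K \<inter> U1 \<noteq> {}} \<inter> {K. closedin ?X K \<and> K \<inter> U2 \<noteq> {}}"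
  have "openin (vietoris ?X) V"
    unfolding V_def U1_def U2_def
    using n m by (intro openin_Int openin_vietoris_lower openin_cantor_cylinder2)
  moreover have "K \<in> V"
    using K AB n closedin_subset[OF K] unfolding V_def U1_def U2_def by blast
  moreover have "\<not> is_partition P" if "P \<in> V" for P
  proof
    assume "is_partition P"
    moreover obtain D1 D2 where "D1 \<in> P" "D1 \<in> U1" "D2 \<in> P" "D2 \<in> U2"
      using \<open>P \<in> V\<close> unfolding V_def by blast
    moreover have "D1 \<noteq> D2" "n \<in> D1 \<inter> D2"
      using \<open>D1 \<in> U1\<close> \<open>D2 \<in> U2\<close> m unfolding U1_def U2_def by auto
    ultimately show False unfolding is_partition_def by blast
  qed
  ultimately show ?thesis by blast
qed

lemma openin_vietoris_nonpartitions:
  "openin (vietoris (subtopology cantor_space F))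
     {K. closedin (subtopology cantor_space F) K \<and> \<not> is_partition K}"
proof (subst openin_subopen, intro ballI)
  let ?X = "subtopology cantor_space F"
  fix K assume "K \<in> {K. closedin ?X K \<and> \<not> is_partition K}"
  then have K: "closedin ?X K" and np: "\<not> is_partition K" by auto
  have "\<Union>K \<subseteq> omega" using closedin_subset[OF K] by auto
  then consider "{} \<notin> K" | n where "n \<in> omega" "n \<notin> \<Union>K"
    | A B where "A \<in> K" "B \<in> K" "A \<noteq> B" "A \<inter> B \<noteq> {}"
    using np unfolding is_partition_def by blast
  then obtain V where V: "openin (vietoris ?X) V" "K \<in> V" "\<forall>P\<in>V. \<not> is_partition P"
  proof cases
    case 1
    then show ?thesis using that vietoris_nbhd_no_partition_if_empty_notin[OF K] by blast
  next
    case 2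
    then show ?thesis using that vietoris_nbhd_no_partition_if_uncovered[OF K] by blast
  next
    case 3
    then show ?thesis using that vietoris_nbhd_no_partition_if_overlap[OF K] by blast
  qed
  then have "V \<subseteq> {K. closedin ?X K \<and> \<not> is_partition K}"
    using openin_subset[OF V(1)] by (auto simp: topspace_vietoris)
  then show "\<exists>T. openin (vietoris ?X) T \<and> K \<in> T \<and> T \<subseteq> {K. closedin ?X K \<and> \<not> is_partition K}"
    using V by blast
qed

theorem mainTheorem1:
  fixes F :: "nat set set"
  assumes "F \<subseteq> Pow omega"
    and "compactin cantor_space F"
  shows "closedin (vietoris (subtopology cantor_space F)) (partitions_in F)
       \<and> compactin (vietoris (subtopology cantor_space F)) (partitions_in F)"
proof -
  let ?X = "subtopology cantor_space F"
  let ?V = "vietoris ?X"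
  have "partitions_in F = {K. closedin ?X K \<and> is_partition K}"
    using closedin_partition closedin_subset unfolding partitions_in_def by fastforce
  also have "\<dots> = topspace ?V - {K. closedin ?X K \<and> \<not> is_partition K}"
    by (auto simp: topspace_vietoris)
  finally have closed: "closedin ?V (partitions_in F)"
    by (simp only:) (intro closedin_diff closedin_topspace openin_vietoris_nonpartitions)
  have "compact_space ?V"
    using assms(2) by (intro compact_space_vietoris compact_space_subtopology)
  with closed show ?thesis
    using closedin_compact_space by blast
qed

end
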